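(* Let $T>0$, $u\in\mathbb{R}$ and $w(v)=e^{-(v-u)^2/(2T)}$ on $(0,\infty)$. Let $\{B_n\}_{n\ge0}$ be the orthonormal polynomials on $(0,\infty)$ with respect to $w$ ($\deg B_n=n$, positive leading coefficient, $\int_0^\infty B_mB_n w\,dv=\delta_{mn}$), and let $\alpha_n,\beta_n$ be the coefficients of their three-term recurrence $$\sqrt{\beta_{n+1}}\,B_{n+1}=(v-\alpha_n)B_n-\sqrt{\beta_n}\,B_{n-1},\qquad \beta_0=0,\ B_{-1}=0,$$ i.e. $\alpha_n=\int_0^\infty vB_n^2w\,dv$ and $\sqrt{\beta_{n+1}}=\int_0^\infty vB_nB_{n+1}w\,dv$. Then $\alpha_0=m_1/m_0$ with $m_i=\int_0^\infty v^iw(v)\,dv$, and for all $n\ge0$, $$\beta_{n+1}=2Tn+T-\beta_n+u\alpha_n-\alpha_n^2,\qquad \alpha_{n+1}=\frac{T}{\beta_{n+1}}\sum_{k=0}^n\alpha_k-\alpha_n+u.$$ *)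

theory Defs
  imports "HOL-Analysis.Analysis" "HOL-Computational_Algebra.Polynomial"
begin

definition wgt :: "real \<Rightarrow> real \<Rightarrow> real \<Rightarrow> real" where
  "wgt T u v = exp (- ((v - u)^2) / (2 * T))"

definition moment :: "real \<Rightarrow> real \<Rightarrow> nat \<Rightarrow> real" where
  "moment T u i = (LINT v:{0<..}|lborel. v ^ i * wgt T u v)"

definition orthonormal_family :: "real \<Rightarrow> real \<Rightarrow> (nat \<Rightarrow> real poly) \<Rightarrow> bool" where
  "orthonormal_family T u B \<longleftrightarrow>
     (\<forall>n. degree (B n) = n \<and> lead_coeff (B n) > 0) \<and>
     (\<forall>m n. (LINT v:{0<..}|lborel. poly (B m) v * poly (B n) v * wgt T u v)
              = (if m = n then 1 else 0))"

definition rec_alpha :: "real \<Rightarrow> real \<Rightarrow> (nat \<Rightarrow> real poly) \<Rightarrow> nat \<Rightarrow> real" where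
  "rec_alpha T u B n = (LINT v:{0<..}|lborel. v * (poly (B n) v)^2 * wgt T u v)"

definition rec_beta :: "real \<Rightarrow> real \<Rightarrow> (nat \<Rightarrow> real poly) \<Rightarrow> nat \<Rightarrow> real" where
  "rec_beta T u B n = (if n = 0 then 0 else
     (LINT v:{0<..}|lborel. v * poly (B (n - 1)) v * poly (B n) v * wgt T u v)^2)"

end

theory Submission
  imports Defs "HOL-Probability.Distributions" "HOL-Real_Asymp.Real_Asymp"
begin

text \<open>
  Write L p for the integral of p against the weight over (0, \<infinity>). Everything needed about
  the orthonormal polynomials holds for any linear functional with an orthonormal basis of
  polynomials: the three-term recurrence, sqrt (\<beta> (n+1)) = lc (B n) / lc (B (n+1)), and the
  sum of \<alpha> 0, ..., \<alpha> n as minus the subleading-to-leading coefficient ratio of B (n+1).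
  The Gaussian weight enters only through integration by parts,
  T L ((X p)') = L (X^2 p) - u L (X p), which comes from w' = -(v - u) w / T; the factor X
  kills the boundary term at 0. Taking p = (B n)^2 and p = B n B (n+1) and evaluating both
  sides with the recurrence and orthonormality gives the two equations.
\<close>

definition X :: "real poly" where
  "X = [:0, 1:]"

lemma poly_X [simp]: "poly X v = v"
  by (simp add: X_def)

lemma degree_X [simp]: "degree X = 1"
  by (simp add: X_def)

lemma pderiv_X [simp]: "pderiv X = 1"
  by (simp add: X_def pderiv_pCons)

lemma coeff_X_mult_0 [simp]: "coeff (X * p) 0 = 0"
  by (simp add: X_def)

lemma coeff_X_mult_Suc [simp]: "coeff (X * p) (Suc j) = coeff p j"
  by (simp add: X_def)

lemma coeff_X_mult_pderiv: "coeff (X * pderiv p) j = of_nat j * coeff p j"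
  by (cases j) (simp_all add: coeff_pderiv)

lemma degree_X_mult_le: "degree (X * p) \<le> Suc (degree p)"
  using degree_mult_le[of X p] by simp

lemma degree_X_mult_pderiv_le: "degree (X * pderiv p) \<le> degree p"
  by (rule degree_le) (simp add: coeff_X_mult_pderiv coeff_eq_0)

locale orthonormal_polys =
  fixes L :: "real poly \<Rightarrow> real" and B :: "nat \<Rightarrow> real poly"
  assumes L_add: "L (p + q) = L p + L q"
    and L_smult: "L (smult c p) = c * L p"
    and degree_B [simp]: "degree (B n) = n"
    and lead_coeff_B_pos: "lead_coeff (B n) > 0"
    and L_B_mult_B: "L (B m * B n) = (if m = n then 1 else 0)"
begin

lemma L_0 [simp]: "L 0 = 0"
  using L_smult[of 0 0] by simp

lemma L_diff: "L (p - q) = L p - L q"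
  using L_add[of "p - q" q] by simp

lemma L_sum: "L (\<Sum>k\<in>A. f k) = (\<Sum>k\<in>A. L (f k))"
  by (induction A rule: infinite_finite_induct) (simp_all add: L_add)

lemma coeff_B_self_nonzero [simp]: "coeff (B n) n \<noteq> 0"
  using lead_coeff_B_pos[of n] by simp

lemma L_combination_mult_B:
  "L ((\<Sum>k\<le>N. smult (c k) (B k)) * B j) = (if j \<le> N then c j else 0)"
  by (simp add: sum_distrib_right L_sum L_smult L_B_mult_B if_distrib[of "\<lambda>x. _ * x"]
      cong: if_cong)

lemma span_B:
  assumes "degree p \<le> N"
  shows "\<exists>c. p = (\<Sum>k\<le>N. smult (c k) (B k))"
  using assms
proof (induction N arbitrary: p)
  case 0
  have "[:coeff p 0:] = smult (coeff p 0 / coeff (B 0) 0) [:coeff (B 0) 0:]"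
    by simp
  then have "p = smult (coeff p 0 / coeff (B 0) 0) (B 0)"
    using degree_0_id[of p] degree_0_id[of "B 0"] 0 by simp
  then show ?case
    by (intro exI[of _ "\<lambda>_. coeff p 0 / coeff (B 0) 0"]) simp
next
  case (Suc N)
  define d where "d = coeff p (Suc N) / lead_coeff (B (Suc N))"
  have "coeff (p - smult d (B (Suc N))) i = 0" if "N < i" for i
  proof (cases "i = Suc N")
    case True
    then show ?thesis
      by (simp add: d_def)
  next
    case False
    then show ?thesis
      using that Suc.prems by (simp add: coeff_eq_0)
  qed
  then have "degree (p - smult d (B (Suc N))) \<le> N"
    by (simp add: degree_le)
  then obtain c where c: "p - smult d (B (Suc N)) = (\<Sum>k\<le>N. smult (c k) (B k))"
    using Suc.IH by blast
  have "(\<Sum>k\<le>N. smult ((c(Suc N := d)) k) (B k)) = (\<Sum>k\<le>N. smult (c k) (B k))"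
    by (intro sum.cong) auto
  then have "p = (\<Sum>k\<le>Suc N. smult ((c(Suc N := d)) k) (B k))"
    using c by (simp add: algebra_simps)
  then show ?case
    by blast
qed

lemma orthogonal_lower_degree:
  assumes "degree q < n"
  shows "L (q * B n) = 0"
proof -
  have "degree q \<le> n - 1"
    using assms by simp
  then obtain c where "q = (\<Sum>k\<le>n - 1. smult (c k) (B k))"
    using span_B by blast
  then show ?thesis
    using assms by (simp add: L_combination_mult_B)
qed

lemma L_mult_B_eq_coeff:
  assumes "degree p \<le> n"
  shows "L (p * B n) = coeff p n / lead_coeff (B n)"
proof -
  obtain c where c: "p = (\<Sum>k\<le>n. smult (c k) (B k))"
    using span_B assms by blast
  have "coeff p n = (\<Sum>k\<le>n. c k * coeff (B k) n)"
    by (subst c) (simp add: coeff_sum)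
  also have "\<dots> = c n * lead_coeff (B n)"
    by (subst sum.remove[of _ n]) (auto intro!: sum.neutral simp: coeff_eq_0)
  finally have "coeff p n = c n * lead_coeff (B n)" .
  moreover have "L (p * B n) = c n"
    by (subst c) (simp add: L_combination_mult_B)
  ultimately show ?thesis
    by simp
qed

lemma eq_0_if_orthogonal_B:
  assumes "degree p \<le> N" and "\<And>k. k \<le> N \<Longrightarrow> L (p * B k) = 0"
  shows "p = 0"
proof -
  obtain c where c: "p = (\<Sum>k\<le>N. smult (c k) (B k))"
    using span_B assms(1) by blast
  have "c k = 0" if "k \<le> N" for k
    using assms(2)[OF that] that by (subst (asm) c) (simp add: L_combination_mult_B)
  then show ?thesis
    by (subst c) simp
qed

definition alpha :: "nat \<Rightarrow> real" where
  "alpha n = L (X * B n * B n)"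

definition sqrt_beta :: "nat \<Rightarrow> real" where
  "sqrt_beta n = (case n of 0 \<Rightarrow> 0 | Suc m \<Rightarrow> L (X * B m * B n))"

lemma sqrt_beta_0 [simp]: "sqrt_beta 0 = 0"
  by (simp add: sqrt_beta_def)

lemma sqrt_beta_Suc: "sqrt_beta (Suc n) = L (X * B n * B (Suc n))"
  by (simp add: sqrt_beta_def)

lemma L_X_B_mult_B_eq_0:
  assumes "Suc m < n"
  shows "L (X * B m * B n) = 0"
  using degree_X_mult_le[of "B m"] assms by (intro orthogonal_lower_degree) simp

lemma sqrt_beta_Suc_eq: "sqrt_beta (Suc n) = lead_coeff (B n) / lead_coeff (B (Suc n))"
  unfolding sqrt_beta_Suc using degree_X_mult_le[of "B n"]
  by (subst L_mult_B_eq_coeff) simp_all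

lemma sqrt_beta_Suc_pos: "sqrt_beta (Suc n) > 0"
  using lead_coeff_B_pos[of n] lead_coeff_B_pos[of "Suc n"] by (simp add: sqrt_beta_Suc_eq)

text \<open>For \<open>n = 0\<close> the last summand vanishes: \<open>sqrt_beta 0 = 0\<close>, while \<open>B (0 - 1) = B 0\<close>.\<close>

lemma three_term_recurrence:
  "X * B n = smult (sqrt_beta (Suc n)) (B (Suc n)) + smult (alpha n) (B n)
     + smult (sqrt_beta n) (B (n - 1))"
proof -
  define R where "R = X * B n - (smult (sqrt_beta (Suc n)) (B (Suc n)) + smult (alpha n) (B n)
     + smult (sqrt_beta n) (B (n - 1)))"
  have "degree R \<le> Suc n"
    unfolding R_def using degree_X_mult_le[of "B n"]
    by (auto intro!: degree_diff_le degree_add_le order.trans[OF degree_smult_le])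
  moreover have "L (R * B k) = 0" if k: "k \<le> Suc n" for k
  proof -
    have L_R: "L (R * B k) = L (X * B n * B k) - (sqrt_beta (Suc n) * L (B (Suc n) * B k)
        + alpha n * L (B n * B k) + sqrt_beta n * L (B (n - 1) * B k))"
      by (simp add: R_def algebra_simps L_add L_diff L_smult)
    consider "k = Suc n" | "k = n" | "Suc k = n" | "Suc k < n"
      using k by (metis Suc_lessI le_SucE le_neq_implies_less)
    then show ?thesis
    proof cases
      case 1
      then show ?thesis
        unfolding L_R by (simp add: L_B_mult_B sqrt_beta_Suc)
    next
      case 2
      then show ?thesis
        unfolding L_R by (cases n) (simp_all add: L_B_mult_B alpha_def)
    next
      case 3
      then show ?thesis
        unfolding L_R by (auto simp: L_B_mult_B sqrt_beta_Suc mult_ac)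
    next
      case 4
      then show ?thesis
        unfolding L_R using L_X_B_mult_B_eq_0[of k n] by (simp add: L_B_mult_B mult_ac)
    qed
  qed
  ultimately have "R = 0"
    by (rule eq_0_if_orthogonal_B)
  then show ?thesis
    by (simp add: R_def)
qed

lemma L_X_B_mult:
  "L (X * B n * p) = sqrt_beta (Suc n) * L (B (Suc n) * p) + alpha n * L (B n * p)
     + sqrt_beta n * L (B (n - 1) * p)"
  unfolding three_term_recurrence by (simp add: distrib_right L_add L_smult)

lemma L_X_B_mult_X_B:
  "L (X * B n * (X * B n)) = sqrt_beta (Suc n) ^ 2 + alpha n ^ 2 + sqrt_beta n ^ 2"
proof -
  have "sqrt_beta n * L (B (n - 1) * (X * B n)) = sqrt_beta n ^ 2"
    by (cases n) (simp_all add: sqrt_beta_Suc mult_ac power2_eq_square)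
  then show ?thesis
    unfolding L_X_B_mult by (simp add: sqrt_beta_Suc alpha_def mult_ac power2_eq_square)
qed

lemma L_X_B_mult_X_B_Suc:
  "L (X * B n * (X * B (Suc n))) = sqrt_beta (Suc n) * (alpha (Suc n) + alpha n)"
proof -
  have "sqrt_beta n * L (B (n - 1) * (X * B (Suc n))) = 0"
  proof (cases n)
    case (Suc m)
    have "L (B m * (X * B (Suc n))) = L (X * B m * B (Suc n))"
      by (simp add: mult_ac)
    then show ?thesis
      using L_X_B_mult_B_eq_0[of m "Suc n"] Suc by simp
  qed simp
  then show ?thesis
    unfolding L_X_B_mult by (simp add: sqrt_beta_Suc alpha_def mult_ac algebra_simps)
qed

lemma alpha_eq_coeff:
  "alpha n = coeff (X * B n) n / lead_coeff (B n) - coeff (B (Suc n)) n / lead_coeff (B (Suc n))"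
proof -
  have "coeff (X * B n) n = sqrt_beta (Suc n) * coeff (B (Suc n)) n + alpha n * lead_coeff (B n)"
    by (subst three_term_recurrence) (cases n; simp add: coeff_eq_0)
  then show ?thesis
    using lead_coeff_B_pos[of n] lead_coeff_B_pos[of "Suc n"]
    by (simp add: sqrt_beta_Suc_eq field_simps)
qed

lemma sum_alpha: "(\<Sum>k\<le>n. alpha k) = - coeff (B (Suc n)) n / lead_coeff (B (Suc n))"
  by (induction n) (simp_all add: alpha_eq_coeff)

lemma alpha_0: "alpha 0 = L X / L 1"
proof -
  define c where "c = coeff (B 0) 0"
  have B_0: "B 0 = [:c:]"
    unfolding c_def using degree_0_id[of "B 0"] by simp
  have "c ^ 2 * L 1 = 1"
    using L_B_mult_B[of 0 0] L_smult[of "c ^ 2" 1] by (simp add: B_0 power2_eq_square)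
  then have "c ^ 2 = 1 / L 1"
    by (auto simp: eq_divide_eq)
  moreover have "alpha 0 = c ^ 2 * L X"
    using L_smult[of "c ^ 2" X] by (simp add: alpha_def B_0 power2_eq_square)
  ultimately show ?thesis
    by simp
qed

lemma L_X_pderiv_B_mult_B: "L (X * pderiv (B n) * B n) = n"
  using degree_X_mult_pderiv_le[of "B n"]
  by (subst L_mult_B_eq_coeff) (simp_all add: coeff_X_mult_pderiv)

lemma L_X_pderiv_B_mult_B_Suc: "L (X * pderiv (B n) * B (Suc n)) = 0"
  using degree_X_mult_pderiv_le[of "B n"] by (intro orthogonal_lower_degree) simp

lemma L_X_pderiv_B_Suc_mult_B:
  "L (X * pderiv (B (Suc n)) * B n) = (\<Sum>k\<le>n. alpha k) / sqrt_beta (Suc n)"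
proof -
  define Q where "Q = X * pderiv (B (Suc n)) - smult (of_nat (Suc n)) (B (Suc n))"
  have "coeff Q i = 0" if "n < i" for i
    using that
    by (cases "i = Suc n") (simp_all add: Q_def coeff_pderiv coeff_X_mult_pderiv coeff_eq_0)
  then have "degree Q \<le> n"
    by (simp add: degree_le)
  then have "L (Q * B n) = coeff Q n / lead_coeff (B n)"
    by (rule L_mult_B_eq_coeff)
  moreover have "coeff Q n = - coeff (B (Suc n)) n"
    by (simp add: Q_def coeff_X_mult_pderiv algebra_simps)
  moreover have "L (X * pderiv (B (Suc n)) * B n) = L (Q * B n)"
    by (simp add: Q_def algebra_simps L_diff L_smult L_B_mult_B)
  ultimately show ?thesis
    using lead_coeff_B_pos[of n] lead_coeff_B_pos[of "Suc n"]
    by (simp add: sum_alpha sqrt_beta_Suc_eq field_simps)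
qed

end

locale gaussian_orthonormal_polys = orthonormal_polys +
  fixes T u :: real
  assumes by_parts: "T * L (pderiv (X * p)) = L (X * X * p) - u * L (X * p)"
begin

lemma sqrt_beta_Suc_squared:
  "sqrt_beta (Suc n) ^ 2 = 2 * T * n + T - sqrt_beta n ^ 2 + u * alpha n - alpha n ^ 2"
proof -
  have "pderiv (X * (B n * B n)) = B n * B n + (X * pderiv (B n) * B n + X * pderiv (B n) * B n)"
    by (simp add: pderiv_mult algebra_simps)
  then have "L (pderiv (X * (B n * B n))) = 1 + 2 * n"
    by (simp only: L_add) (simp add: L_B_mult_B L_X_pderiv_B_mult_B)
  moreover have "L (X * X * (B n * B n)) = sqrt_beta (Suc n) ^ 2 + alpha n ^ 2 + sqrt_beta n ^ 2"
    using L_X_B_mult_X_B[of n] by (simp add: mult_ac)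
  moreover have "L (X * (B n * B n)) = alpha n"
    by (simp add: alpha_def mult_ac)
  ultimately show ?thesis
    using by_parts[of "B n * B n"] by (simp add: algebra_simps)
qed

lemma alpha_Suc:
  "alpha (Suc n) = T / sqrt_beta (Suc n) ^ 2 * (\<Sum>k\<le>n. alpha k) - alpha n + u"
proof -
  have "pderiv (X * (B n * B (Suc n)))
          = B n * B (Suc n) + X * pderiv (B n) * B (Suc n) + X * pderiv (B (Suc n)) * B n"
    by (simp add: pderiv_mult algebra_simps)
  then have "L (pderiv (X * (B n * B (Suc n)))) = (\<Sum>k\<le>n. alpha k) / sqrt_beta (Suc n)"
    by (simp add: L_add L_B_mult_B L_X_pderiv_B_mult_B_Suc L_X_pderiv_B_Suc_mult_B)
  moreover have "L (X * X * (B n * B (Suc n))) = sqrt_beta (Suc n) * (alpha (Suc n) + alpha n)"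
    using L_X_B_mult_X_B_Suc[of n] by (simp add: mult_ac)
  moreover have "L (X * (B n * B (Suc n))) = sqrt_beta (Suc n)"
    by (simp add: sqrt_beta_Suc mult_ac)
  ultimately have "T * ((\<Sum>k\<le>n. alpha k) / sqrt_beta (Suc n))
                    = sqrt_beta (Suc n) * (alpha (Suc n) + alpha n) - u * sqrt_beta (Suc n)"
    using by_parts[of "B n * B (Suc n)"] by simp
  then show ?thesis
    using sqrt_beta_Suc_pos[of n] by (simp add: field_simps power2_eq_square)
qed

end

definition wgt_integral :: "real \<Rightarrow> real \<Rightarrow> real poly \<Rightarrow> real" where
  "wgt_integral T u p = (LINT v:{0<..}|lborel. poly p v * wgt T u v)"

lemma integrable_poly_wgt:
  assumes "T > 0"
  shows "integrable lborel (\<lambda>v. poly p v * wgt T u v)"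
proof -
  have normal: "wgt T u v = sqrt (2 * pi * T) * normal_density u (sqrt T) v" for v
    using assms by (simp add: wgt_def normal_density_def)
  have moment: "integrable lborel (\<lambda>v. (v - u) ^ k * wgt T u v)" for k
    using integrable_mult_left[OF integrable_normal_moment[of "sqrt T" u k], of "sqrt (2 * pi * T)"]
    using assms by (simp add: normal mult_ac)
  define q where "q = pcompose p [:u, 1:]"
  have "poly p v = (\<Sum>i\<le>degree q. coeff q i * (v - u) ^ i)" for v
    unfolding q_def poly_altdef[symmetric] by (simp add: poly_pcompose)
  then have "(\<lambda>v. poly p v * wgt T u v) = (\<lambda>v. \<Sum>i\<le>degree q. coeff q i * ((v - u) ^ i * wgt T u v))"
    by (simp add: sum_distrib_right mult.assoc)
  then show ?thesis
    by (auto intro!: integrable_sum integrable_mult_right moment)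
qed

lemma set_integrable_poly_wgt:
  "T > 0 \<Longrightarrow> set_integrable lborel {0<..} (\<lambda>v. poly p v * wgt T u v)"
  unfolding set_integrable_def
  by (rule integrable_mult_indicator[OF _ integrable_poly_wgt]) simp_all

lemma wgt_integral_add:
  "T > 0 \<Longrightarrow> wgt_integral T u (p + q) = wgt_integral T u p + wgt_integral T u q"
  unfolding wgt_integral_def
  using set_integral_add(2)[OF set_integrable_poly_wgt set_integrable_poly_wgt]
  by (simp add: distrib_right)

lemma wgt_integral_diff:
  "T > 0 \<Longrightarrow> wgt_integral T u (p - q) = wgt_integral T u p - wgt_integral T u q"
  unfolding wgt_integral_def
  using set_integral_diff(2)[OF set_integrable_poly_wgt set_integrable_poly_wgt]
  by (simp add: left_diff_distrib)

lemma wgt_integral_smult: "wgt_integral T u (smult c p) = c * wgt_integral T u p"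
  unfolding wgt_integral_def by (simp add: mult.assoc)

lemma has_real_derivative_poly_wgt:
  assumes "T \<noteq> 0"
  shows "((\<lambda>v. poly p v * wgt T u v) has_real_derivative
           poly (pderiv p - smult (1 / T) ([:- u, 1:] * p)) x * wgt T u x) (at x)"
proof -
  have "((\<lambda>v. poly p v * wgt T u v) has_real_derivative
           poly (pderiv p) x * wgt T u x + poly p x * (wgt T u x * (- (2 * (x - u)) / (2 * T)))) (at x)"
    unfolding wgt_def using assms
    by (auto intro!: derivative_eq_intros poly_DERIV simp: power2_eq_square algebra_simps)
      (simp add: field_simps)
  moreover have "poly (pderiv p) x * wgt T u x + poly p x * (wgt T u x * (- (2 * (x - u)) / (2 * T)))
      = poly (pderiv p - smult (1 / T) ([:- u, 1:] * p)) x * wgt T u x"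
    using assms by (simp add: field_simps)
  ultimately show ?thesis
    by (rule DERIV_cong)
qed

lemma poly_wgt_tendsto_0_at_top:
  assumes "T > 0"
  shows "((\<lambda>v. poly p v * wgt T u v) \<longlongrightarrow> 0) at_top"
proof -
  have monomial: "((\<lambda>v. v ^ k * exp (- ((v - u) ^ 2) / (2 * T))) \<longlongrightarrow> 0) at_top" for k
    using assms by real_asymp
  have "(\<lambda>v. poly p v * wgt T u v)
          = (\<lambda>v. \<Sum>i\<le>degree p. coeff p i * (v ^ i * exp (- ((v - u) ^ 2) / (2 * T))))"
    unfolding wgt_def poly_altdef by (simp add: sum_distrib_right mult.assoc)
  then show ?thesis
    by (simp only:) (intro tendsto_null_sum tendsto_mult_right_zero monomial)
qed

lemma wgt_integral_pderiv:
  assumes "T > 0"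
  shows "T * wgt_integral T u (pderiv p)
           = wgt_integral T u ([:- u, 1:] * p) - T * poly p 0 * wgt T u 0"
proof -
  define F where "F = (\<lambda>v. poly p v * wgt T u v)"
  define Q where "Q = pderiv p - smult (1 / T) ([:- u, 1:] * p)"
  have einterval: "einterval 0 \<infinity> = {0::real<..}"
    by (auto simp: einterval_def zero_ereal_def)
  have "(LBINT v=0..\<infinity>. poly Q v * wgt T u v) = 0 - F 0"
  proof (rule interval_integral_FTC_integrable)
    show "((F \<circ> real_of_ereal) \<longlongrightarrow> F 0) (at_right 0)"
    proof -
      have "isCont F 0"
        unfolding F_def wgt_def using assms by (intro continuous_intros) simp
      then have "(F \<longlongrightarrow> F 0) (at_right 0)"
        unfolding isCont_def filterlim_at_split by blast
      then show ?thesis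
        unfolding zero_ereal_def ereal_tendsto_simps1 .
    qed
    show "((F \<circ> real_of_ereal) \<longlongrightarrow> 0) (at_left \<infinity>)"
      unfolding ereal_tendsto_simps1 F_def using assms by (rule poly_wgt_tendsto_0_at_top)
    show "set_integrable lborel (einterval 0 \<infinity>) (\<lambda>v. poly Q v * wgt T u v)"
      unfolding einterval using assms by (rule set_integrable_poly_wgt)
  qed (use assms has_real_derivative_poly_wgt[of T p u]
        in \<open>auto simp: F_def Q_def wgt_def has_real_derivative_iff_has_vector_derivative
                intro!: continuous_intros\<close>)
  moreover have "(LBINT v=0..\<infinity>. poly Q v * wgt T u v) = wgt_integral T u Q"
    by (simp add: interval_lebesgue_integral_def einterval wgt_integral_def)
  ultimately show ?thesis
    using assms by (simp add: Q_def F_def wgt_integral_diff wgt_integral_smult field_simps)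
qed


lemma wgt_integral_by_parts:
  assumes "T > 0"
  shows "T * wgt_integral T u (pderiv (X * p))
           = wgt_integral T u (X * X * p) - u * wgt_integral T u (X * p)"
proof -
  have "[:- u, 1:] * (X * p) = X * X * p - smult u (X * p)"
    by (simp add: X_def)
  then show ?thesis
    using wgt_integral_pderiv[OF assms, where p = "X * p"]
    by (simp add: wgt_integral_diff[OF assms] wgt_integral_smult)
qed

lemma gaussian_orthonormal_polys_wgt_integral:
  assumes "T > 0" and "orthonormal_family T u B"
  shows "gaussian_orthonormal_polys (wgt_integral T u) B T u"
proof
  show "wgt_integral T u (p + q) = wgt_integral T u p + wgt_integral T u q" for p q
    using assms(1) by (rule wgt_integral_add)
  show "wgt_integral T u (smult c p) = c * wgt_integral T u p" for c p
    by (rule wgt_integral_smult)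
  show "degree (B n) = n" and "lead_coeff (B n) > 0" for n
    using assms(2) unfolding orthonormal_family_def by blast+
  show "wgt_integral T u (B m * B n) = (if m = n then 1 else 0)" for m n
    using assms(2) unfolding orthonormal_family_def wgt_integral_def by (simp add: mult.assoc)
  show "T * wgt_integral T u (pderiv (X * p))
          = wgt_integral T u (X * X * p) - u * wgt_integral T u (X * p)" for p
    using assms(1) by (rule wgt_integral_by_parts)
qed

theorem mainTheorem3:
  fixes T u :: real and B :: "nat \<Rightarrow> real poly"
  assumes "T > 0"
    and "orthonormal_family T u B"
  shows "rec_alpha T u B 0 = moment T u 1 / moment T u 0 \<and>
         (\<forall>n. rec_beta T u B (n + 1) =
               2 * T * real n + T - rec_beta T u B n + u * rec_alpha T u B n - (rec_alpha T u B n)^2 \<and>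
               rec_alpha T u B (n + 1) =
               T / rec_beta T u B (n + 1) * (\<Sum>k\<le>n. rec_alpha T u B k) - rec_alpha T u B n + u)"
proof -
  interpret gaussian_orthonormal_polys "wgt_integral T u" B T u
    using assms by (rule gaussian_orthonormal_polys_wgt_integral)
  have rec_alpha_eq: "rec_alpha T u B n = alpha n" for n
    by (simp add: rec_alpha_def alpha_def wgt_integral_def power2_eq_square mult_ac)
  have rec_beta_eq: "rec_beta T u B n = sqrt_beta n ^ 2" for n
    by (cases n) (simp_all add: rec_beta_def sqrt_beta_Suc wgt_integral_def mult_ac)
  have "moment T u 0 = wgt_integral T u 1" and "moment T u 1 = wgt_integral T u X"
    by (simp_all add: moment_def wgt_integral_def)
  then show ?thesis
    using alpha_0 sqrt_beta_Suc_squared alpha_Suc by (simp add: rec_alpha_eq rec_beta_eq)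
qed

end
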